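(* Let $R=\mathbb{Z}$ or $R=\mathbb{Z}[i]$, let $\lambda$ be a positive integer, and let $A\in R^{n\times n}$ satisfy $A^*A=\lambda I$. Let $\mathrm{SNF}(A)=\mathrm{diag}(\alpha_1,\dots,\alpha_n)$ be its Smith normal form. Then $\overline{\alpha_j}\,\alpha_{n+1-j}=\lambda$ for all $1\leq j\leq n$.
   Context: The Smith normal form of $A\in R^{n\times n}$ is $\mathrm{diag}(\alpha_1,\dots,\alpha_n)$ where $A\in\mathrm{GL}_n(R)\,\mathrm{diag}(\alpha_1,\dots,\alpha_n)\,\mathrm{GL}_n(R)$, $\alpha_1\mid\alpha_2\mid\dots\mid\alpha_n$, and the $\alpha_j$ are normalized: for $R=\mathbb{Z}$, $\alpha_j>0$; for $R=\mathbb{Z}[i]$, $\mathrm{Re}\,\alpha_j>0$ and $\mathrm{Im}\,\alpha_j\geq 0$. $A^*$ is the conjugate transpose. *)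

theory Defs
  imports "Jordan_Normal_Form.Matrix" Complex_Main
begin

text \<open>Both rings are realised as subrings of the complex numbers.
  gauss = False: R = Z; gauss = True: R = Z[i].\<close>

definition ring_R :: "bool \<Rightarrow> complex set" where
  "ring_R gauss = (if gauss then {z. Re z \<in> \<int> \<and> Im z \<in> \<int>}
                   else {z. Re z \<in> \<int> \<and> Im z = 0})"

definition R_dvd :: "bool \<Rightarrow> complex \<Rightarrow> complex \<Rightarrow> bool" where
  "R_dvd gauss a b \<longleftrightarrow> (\<exists>c \<in> ring_R gauss. b = a * c)"

definition mat_over :: "bool \<Rightarrow> nat \<Rightarrow> complex mat set" where
  "mat_over gauss n = {M \<in> carrier_mat n n. \<forall>i<n. \<forall>j<n. M $$ (i, j) \<in> ring_R gauss}"

definition GL_R :: "bool \<Rightarrow> nat \<Rightarrow> complex mat set" where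
  "GL_R gauss n = {P \<in> mat_over gauss n. \<exists>Q \<in> mat_over gauss n. P * Q = 1\<^sub>m n \<and> Q * P = 1\<^sub>m n}"

definition diag_of :: "nat \<Rightarrow> (nat \<Rightarrow> complex) \<Rightarrow> complex mat" where
  "diag_of n \<alpha> = mat n n (\<lambda>(i, j). if i = j then \<alpha> i else 0)"

definition snf_normalized :: "bool \<Rightarrow> complex \<Rightarrow> bool" where
  "snf_normalized gauss z = (if gauss then Re z > 0 \<and> Im z \<ge> 0 else Re z > 0)"

text \<open>alpha 0, ..., alpha (n-1) (0-indexed) is the Smith normal form of A over R.\<close>
definition is_SNF :: "bool \<Rightarrow> nat \<Rightarrow> complex mat \<Rightarrow> (nat \<Rightarrow> complex) \<Rightarrow> bool" where
  "is_SNF gauss n A \<alpha> \<longleftrightarrow>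
     (\<forall>j<n. \<alpha> j \<in> ring_R gauss \<and> snf_normalized gauss (\<alpha> j)) \<and>
     (\<forall>j. Suc j < n \<longrightarrow> R_dvd gauss (\<alpha> j) (\<alpha> (Suc j))) \<and>
     (\<exists>P \<in> GL_R gauss n. \<exists>Q \<in> GL_R gauss n. A = P * diag_of n \<alpha> * Q)"

definition conj_transpose :: "complex mat \<Rightarrow> complex mat" where
  "conj_transpose A = transpose_mat (map_mat cnj A)"

end

theory Submission
  imports Defs "Jordan_Normal_Form.Determinant"
begin

text \<open>Write \<open>A = P D Q\<close> with \<open>D = diag(\<alpha>)\<close> and \<open>P, Q\<close> invertible over \<open>R\<close>. From
  \<open>A\<^sup>* A = \<lambda> I\<close> one gets \<open>P\<^sup>* A Q\<^sup>* = \<lambda> (D\<^sup>*)\<^sup>-\<^sup>1\<close>, so \<open>A\<close> is also equivalent over \<open>R\<close> to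
  \<open>diag(\<beta>)\<close> with \<open>\<beta>(j) = \<lambda> / conj(\<alpha>(n + 1 - j))\<close>, the order being reversed by a
  permutation matrix. The \<open>\<beta>(j)\<close> lie in \<open>R\<close>, form a divisor chain, and are normalized since
  \<open>\<lambda> / conj a = (\<lambda> / |a|\<^sup>2) a\<close>; so \<open>diag(\<beta>)\<close> is another Smith normal form of \<open>A\<close> and
  \<open>\<alpha> = \<beta>\<close> by uniqueness. Uniqueness comes from determinantal divisors: \<open>\<alpha>(1) \<cdots> \<alpha>(k)\<close>
  divides every \<open>k \<times> k\<close> minor of \<open>X D Y\<close>, so the prefix products of two Smith forms of
  the same matrix are associates, hence so are their entries, and normalization picks the
  same associate.\<close>

section \<open>Divisibility in \<open>R\<close>\<close>

lemma ring_R_zero [simp]: "0 \<in> ring_R g"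
  and ring_R_one [simp]: "1 \<in> ring_R g"
  and ring_R_of_int [simp]: "of_int k \<in> ring_R g"
  by (auto simp: ring_R_def)

lemma ring_R_add [simp]: "a \<in> ring_R g \<Longrightarrow> b \<in> ring_R g \<Longrightarrow> a + b \<in> ring_R g"
  and ring_R_mult [simp]: "a \<in> ring_R g \<Longrightarrow> b \<in> ring_R g \<Longrightarrow> a * b \<in> ring_R g"
  and ring_R_cnj [simp]: "a \<in> ring_R g \<Longrightarrow> cnj a \<in> ring_R g"
  by (auto simp: ring_R_def split: if_splits)

lemma ring_R_sum: "(\<And>x. x \<in> S \<Longrightarrow> f x \<in> ring_R g) \<Longrightarrow> sum f S \<in> ring_R g"
  by (induction S rule: infinite_finite_induct) auto

lemma ring_R_prod: "(\<And>x. x \<in> S \<Longrightarrow> f x \<in> ring_R g) \<Longrightarrow> prod f S \<in> ring_R g"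
  by (induction S rule: infinite_finite_induct) auto

lemma R_dvd_refl [simp]: "R_dvd g a a"
  and R_dvd_zero [simp]: "R_dvd g a 0"
  unfolding R_dvd_def by (auto intro: bexI[of _ 1] bexI[of _ 0])

lemma R_dvd_trans: "R_dvd g a b \<Longrightarrow> R_dvd g b c \<Longrightarrow> R_dvd g a c"
  unfolding R_dvd_def by (metis ring_R_mult mult.assoc)

lemma R_dvd_mult_right: "R_dvd g a b \<Longrightarrow> x \<in> ring_R g \<Longrightarrow> R_dvd g a (b * x)"
  unfolding R_dvd_def by (metis ring_R_mult mult.assoc)

lemma R_dvd_mult_mono: "R_dvd g a b \<Longrightarrow> R_dvd g c d \<Longrightarrow> R_dvd g (a * c) (b * d)"
  unfolding R_dvd_def by (metis ring_R_mult mult.assoc mult.left_commute)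

lemma R_dvd_sum: "(\<And>x. x \<in> S \<Longrightarrow> R_dvd g a (f x)) \<Longrightarrow> R_dvd g a (sum f S)"
proof (induction S rule: infinite_finite_induct)
  case (insert x F)
  then show ?case
    unfolding R_dvd_def by (simp, metis ring_R_add distrib_left)
qed auto

lemma R_dvd_mult_cancel:
  assumes "R_dvd g b a" "R_dvd g (a * x) (b * y)" "b \<noteq> 0"
  shows "R_dvd g x y"
proof -
  obtain u v where "u \<in> ring_R g" "a = b * u" "v \<in> ring_R g" "b * y = a * x * v"
    using assms(1,2) unfolding R_dvd_def by blast
  then have "y = x * (u * v)" using assms(3) by (simp add: ac_simps)
  then show ?thesis unfolding R_dvd_def using \<open>u \<in> _\<close> \<open>v \<in> _\<close> by auto
qed

definition dvd_chain :: "bool \<Rightarrow> nat \<Rightarrow> (nat \<Rightarrow> complex) \<Rightarrow> bool" where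
  "dvd_chain g n b \<longleftrightarrow> (\<forall>j. Suc j < n \<longrightarrow> R_dvd g (b j) (b (Suc j)))"

lemma dvd_chain_le:
  assumes "dvd_chain g n b" "i \<le> j" "j < n"
  shows "R_dvd g (b i) (b j)"
  using assms(2,3)
proof (induction j)
  case (Suc j)
  then show ?case
    using assms(1) R_dvd_trans unfolding dvd_chain_def by (cases "i = Suc j") auto
qed auto

lemma dvd_chain_prod:
  assumes chain: "dvd_chain g n b"
  shows "S \<subseteq> {..<n} \<Longrightarrow> card S = k \<Longrightarrow> R_dvd g (\<Prod>i<k. b i) (\<Prod>s\<in>S. b s)"
proof (induction k arbitrary: S)
  case 0
  then have "S = {}" using finite_subset[of S "{..<n}"] by auto
  then show ?case by simp
next
  case (Suc k)
  have fin: "finite S" using Suc.prems(1) finite_subset by blast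
  define m where "m = Max S"
  have "S \<noteq> {}" using Suc.prems(2) by auto
  then have m: "m \<in> S" "m < n" using fin Suc.prems(1) m_def by auto
  have "S \<subseteq> {..m}" using fin m_def by auto
  then have "k \<le> m" using card_mono[of "{..m}" S] Suc.prems(2) by auto
  then have "R_dvd g (b k) (b m)" using dvd_chain_le[OF chain _ \<open>m < n\<close>] by blast
  moreover have "R_dvd g (\<Prod>i<k. b i) (\<Prod>s\<in>S - {m}. b s)"
    using Suc.IH[of "S - {m}"] Suc.prems fin m by auto
  ultimately show ?case
    using R_dvd_mult_mono fin m by (fastforce simp: prod.remove mult.commute)
qed

section \<open>Matrices over \<open>R\<close>\<close>

lemma mult_carrier_mat_square [simp]:
  "A \<in> carrier_mat n n \<Longrightarrow> B \<in> carrier_mat n n \<Longrightarrow> A * B \<in> carrier_mat n n"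
  by (rule mult_carrier_mat)

definition entries_in_R :: "bool \<Rightarrow> complex mat \<Rightarrow> bool" where
  "entries_in_R g M \<longleftrightarrow> (\<forall>i<dim_row M. \<forall>j<dim_col M. M $$ (i, j) \<in> ring_R g)"

lemma mat_over_iff: "M \<in> mat_over g n \<longleftrightarrow> M \<in> carrier_mat n n \<and> entries_in_R g M"
  unfolding mat_over_def entries_in_R_def by auto

lemma entries_in_R_mult:
  "entries_in_R g A \<Longrightarrow> entries_in_R g B \<Longrightarrow> dim_col A = dim_row B \<Longrightarrow> entries_in_R g (A * B)"
  unfolding entries_in_R_def by (auto simp: scalar_prod_def intro!: ring_R_sum)

lemma entries_in_R_conj_transpose: "entries_in_R g M \<Longrightarrow> entries_in_R g (conj_transpose M)"
  unfolding entries_in_R_def conj_transpose_def by auto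

lemma det_in_ring_R:
  assumes "entries_in_R g M" "M \<in> carrier_mat k k"
  shows "det M \<in> ring_R g"
  unfolding det_def'[OF assms(2)] using assms
  by (auto simp: entries_in_R_def intro!: ring_R_sum ring_R_mult ring_R_prod)

lemma mat_over_mult: "A \<in> mat_over g n \<Longrightarrow> B \<in> mat_over g n \<Longrightarrow> A * B \<in> mat_over g n"
  by (auto simp: mat_over_iff intro: entries_in_R_mult)

lemma conj_transpose_carrier [simp]:
  "M \<in> carrier_mat n m \<Longrightarrow> conj_transpose M \<in> carrier_mat m n"
  unfolding conj_transpose_def by auto

lemma dim_conj_transpose [simp]:
  "dim_row (conj_transpose M) = dim_col M" "dim_col (conj_transpose M) = dim_row M"
  unfolding conj_transpose_def by simp_all

lemma conj_transpose_mult: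
  "A \<in> carrier_mat n m \<Longrightarrow> B \<in> carrier_mat m p \<Longrightarrow>
    conj_transpose (A * B) = conj_transpose B * conj_transpose A"
  unfolding conj_transpose_def by (intro eq_matI) (auto simp: scalar_prod_def mult.commute)

lemma conj_transpose_one [simp]: "conj_transpose (1\<^sub>m n) = 1\<^sub>m n"
  unfolding conj_transpose_def by (intro eq_matI) auto

lemma conj_transpose_diag_of: "conj_transpose (diag_of n a) = diag_of n (\<lambda>i. cnj (a i))"
  unfolding conj_transpose_def diag_of_def by (intro eq_matI) auto

lemma GL_R_carrier: "P \<in> GL_R g n \<Longrightarrow> P \<in> carrier_mat n n"
  unfolding GL_R_def mat_over_def by auto

lemma GL_R_inverse:
  assumes "P \<in> GL_R g n"
  obtains Q where "Q \<in> GL_R g n" "P * Q = 1\<^sub>m n" "Q * P = 1\<^sub>m n"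
  using assms unfolding GL_R_def by blast

lemma GL_R_mult:
  assumes P: "P \<in> GL_R g n" and Q: "Q \<in> GL_R g n"
  shows "P * Q \<in> GL_R g n"
proof -
  obtain P' Q' where P': "P' \<in> GL_R g n" "P * P' = 1\<^sub>m n" "P' * P = 1\<^sub>m n"
    and Q': "Q' \<in> GL_R g n" "Q * Q' = 1\<^sub>m n" "Q' * Q = 1\<^sub>m n"
    using GL_R_inverse[OF P] GL_R_inverse[OF Q] by metis
  note carriers = P[THEN GL_R_carrier] Q[THEN GL_R_carrier] P'(1)[THEN GL_R_carrier] Q'(1)[THEN GL_R_carrier]
  have "P * Q * (Q' * P') = P * (Q * Q') * P'" "Q' * P' * (P * Q) = Q' * (P' * P) * Q"
    using carriers by (simp_all add: assoc_mult_mat[of _ n n _ n _ n])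
  then have "P * Q * (Q' * P') = 1\<^sub>m n" "Q' * P' * (P * Q) = 1\<^sub>m n"
    using carriers P'(2,3) Q'(2,3) by simp_all
  then show ?thesis
    using P Q P' Q' unfolding GL_R_def
    by (intro CollectI conjI bexI[of _ "Q' * P'"]) (auto simp: mat_over_mult)
qed

lemma GL_R_conj_transpose:
  assumes P: "P \<in> GL_R g n"
  shows "conj_transpose P \<in> GL_R g n"
proof -
  obtain Q where Q: "Q \<in> GL_R g n" "P * Q = 1\<^sub>m n" "Q * P = 1\<^sub>m n"
    using GL_R_inverse[OF P] .
  have "conj_transpose P * conj_transpose Q = conj_transpose (Q * P)"
    "conj_transpose Q * conj_transpose P = conj_transpose (P * Q)"
    using conj_transpose_mult Q(1)[THEN GL_R_carrier] P[THEN GL_R_carrier] by metis+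
  then have "conj_transpose P * conj_transpose Q = 1\<^sub>m n"
    "conj_transpose Q * conj_transpose P = 1\<^sub>m n"
    using Q(2,3) by simp_all
  then show ?thesis
    using P Q(1) unfolding GL_R_def
    by (auto simp: mat_over_iff entries_in_R_conj_transpose intro!: bexI[of _ "conj_transpose Q"])
qed

section \<open>Minors of products with a diagonal matrix\<close>

lemma diag_of_carrier [simp]: "diag_of n a \<in> carrier_mat n n"
  and dim_row_diag_of [simp]: "dim_row (diag_of n a) = n"
  and dim_col_diag_of [simp]: "dim_col (diag_of n a) = n"
  unfolding diag_of_def by auto

lemma det_diag_of: "det (diag_of k a) = (\<Prod>i<k. a i)"
proof -
  have "det (diag_of k a) = prod_list (diag_mat (diag_of k a))"
    by (rule det_upper_triangular[of _ k]) (auto simp: upper_triangular_def diag_of_def)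
  also have "\<dots> = (\<Prod>i<k. a i)"
    by (simp add: prod_list_diag_prod diag_of_def atLeast0LessThan)
  finally show ?thesis .
qed

lemma row_diag_of_mult:
  assumes "Y \<in> carrier_mat n k" "i < n"
  shows "row (diag_of n a * Y) i = a i \<cdot>\<^sub>v row Y i"
proof -
  have "(if i = l then a i else 0) * y = (if i = l then a i * y else 0)" for l and y :: complex
    by simp
  then show ?thesis
    using assms unfolding diag_of_def by (intro eq_vecI) (auto simp: scalar_prod_def)
qed

lemma diag_of_mult_eq_smult_one:
  assumes nz: "\<forall>i<n. d i \<noteq> 0" and M: "M \<in> carrier_mat n n"
    and eq: "diag_of n d * M = c \<cdot>\<^sub>m 1\<^sub>m n"
  shows "M = diag_of n (\<lambda>i. c / d i)"
proof (rule eq_matI)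
  fix i j assume "i < dim_row (diag_of n (\<lambda>i. c / d i))" "j < dim_col (diag_of n (\<lambda>i. c / d i))"
  then have ij: "i < n" "j < n" by simp_all
  have "d i * M $$ (i, j) = row (diag_of n d * M) i $ j"
    using M ij by (simp add: row_diag_of_mult)
  also have "\<dots> = (diag_of n d * M) $$ (i, j)"
    using M ij by simp
  also have "\<dots> = (if i = j then c else 0)"
    unfolding eq using ij by simp
  finally show "M $$ (i, j) = diag_of n (\<lambda>i. c / d i) $$ (i, j)"
    using nz ij by (auto simp: diag_of_def field_simps)
qed (use M in auto)

text \<open>A Cauchy--Binet type divisibility: expanding \<open>det (X * (diag_of n \<gamma> * Y))\<close>
  multilinearly in the rows, each term is a product of \<open>k\<close> entries \<open>\<gamma> s\<close> with distinct
  indices \<open>s\<close> times an element of \<open>R\<close>, or vanishes because two rows coincide.\<close>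
lemma R_dvd_det_mult_diag:
  assumes X: "X \<in> carrier_mat k n" "entries_in_R g X"
    and Y: "Y \<in> carrier_mat n k" "entries_in_R g Y"
    and c: "\<And>S. S \<subseteq> {..<n} \<Longrightarrow> card S = k \<Longrightarrow> R_dvd g c (\<Prod>s\<in>S. \<gamma> s)"
  shows "R_dvd g c (det (X * diag_of n \<gamma> * Y))"
proof -
  define W where "W = diag_of n \<gamma> * Y"
  have W: "W \<in> carrier_mat n k" unfolding W_def using mult_carrier_mat[OF diag_of_carrier Y(1)] .
  have XW: "X * diag_of n \<gamma> * Y = X * W"
    unfolding W_def using assoc_mult_mat[OF X(1) diag_of_carrier Y(1)] .
  let ?F = "{f. (\<forall>i\<in>{0..<k}. f i \<in> {0..<n}) \<and> (\<forall>i. i \<notin> {0..<k} \<longrightarrow> f i = i)}"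
  let ?t = "\<lambda>f. det (mat\<^sub>r k k (\<lambda>i. X $$ (i, f i) \<cdot>\<^sub>v row W (f i)))"
  have "det (X * W) = sum ?t ?F"
    unfolding mat_mul_finsum_alt[OF X(1) W] by (rule det_linear_rows_sum) (use W in auto)
  moreover have "R_dvd g c (?t f)" if f: "f \<in> ?F" for f
  proof -
    have fi: "\<And>i. i < k \<Longrightarrow> f i < n" using f by auto
    have "mat\<^sub>r k k (\<lambda>i. X $$ (i, f i) \<cdot>\<^sub>v row W (f i)) =
          mat\<^sub>r k k (\<lambda>i. (X $$ (i, f i) * \<gamma> (f i)) \<cdot>\<^sub>v row Y (f i))"
      by (intro eq_matI) (use fi Y in \<open>auto simp: W_def row_diag_of_mult\<close>)
    then have t: "?t f = (\<Prod>i\<in>{0..<k}. X $$ (i, f i) * \<gamma> (f i)) * det (mat\<^sub>r k k (\<lambda>i. row Y (f i)))"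
      using det_rows_mul[of "\<lambda>i. row Y (f i)" k "\<lambda>i. X $$ (i, f i) * \<gamma> (f i)"] Y fi by auto
    show ?thesis
    proof (cases "inj_on f {0..<k}")
      case True
      have "R_dvd g c (\<Prod>s\<in>f ` {0..<k}. \<gamma> s)"
        by (rule c) (use fi card_image[OF True] in auto)
      then have \<gamma>: "R_dvd g c (\<Prod>i\<in>{0..<k}. \<gamma> (f i))"
        by (simp add: prod.reindex[OF True])
      have X_prod: "(\<Prod>i\<in>{0..<k}. X $$ (i, f i)) \<in> ring_R g"
        using X fi by (auto simp: entries_in_R_def intro!: ring_R_prod)
      have Y_det: "det (mat\<^sub>r k k (\<lambda>i. row Y (f i))) \<in> ring_R g"
        by (rule det_in_ring_R[of g _ k]) (use Y fi in \<open>auto simp: entries_in_R_def\<close>)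
      have "?t f = (\<Prod>i\<in>{0..<k}. \<gamma> (f i)) *
          ((\<Prod>i\<in>{0..<k}. X $$ (i, f i)) * det (mat\<^sub>r k k (\<lambda>i. row Y (f i))))"
        unfolding t prod.distrib by (simp add: ac_simps)
      then show ?thesis
        using R_dvd_mult_right[OF \<gamma> ring_R_mult[OF X_prod Y_det]] by simp
    next
      case False
      then obtain i j where ij: "i < k" "j < k" "i \<noteq> j" "f i = f j"
        unfolding inj_on_def by auto
      have "det (mat\<^sub>r k k (\<lambda>i. row Y (f i))) = 0"
        by (rule det_identical_rows[OF _ ij(3) ij(1) ij(2)]) (use ij in auto)
      then show ?thesis using t by simp
    qed
  qed
  ultimately show ?thesis unfolding XW by (metis (no_types, lifting) R_dvd_sum)
qed

definition upper_rows :: "nat \<Rightarrow> 'a mat \<Rightarrow> 'a mat" where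
  "upper_rows k X = mat k (dim_col X) (\<lambda>(i, j). X $$ (i, j))"

definition left_cols :: "nat \<Rightarrow> 'a mat \<Rightarrow> 'a mat" where
  "left_cols k Y = mat (dim_row Y) k (\<lambda>(i, j). Y $$ (i, j))"

lemma upper_rows_carrier: "X \<in> carrier_mat n m \<Longrightarrow> upper_rows k X \<in> carrier_mat k m"
  unfolding upper_rows_def by auto

lemma left_cols_carrier: "Y \<in> carrier_mat n m \<Longrightarrow> left_cols k Y \<in> carrier_mat n k"
  unfolding left_cols_def by auto

lemma entries_in_R_upper_rows: "entries_in_R g X \<Longrightarrow> k \<le> dim_row X \<Longrightarrow> entries_in_R g (upper_rows k X)"
  unfolding entries_in_R_def upper_rows_def by auto

lemma entries_in_R_left_cols: "entries_in_R g Y \<Longrightarrow> k \<le> dim_col Y \<Longrightarrow> entries_in_R g (left_cols k Y)"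
  unfolding entries_in_R_def left_cols_def by auto

lemma upper_rows_mult:
  "k \<le> dim_row A \<Longrightarrow> dim_col A = dim_row B \<Longrightarrow>
    upper_rows k (A * B) = upper_rows k A * (B :: 'a :: semiring_0 mat)"
  unfolding upper_rows_def by (intro eq_matI) (auto simp: scalar_prod_def row_def intro!: sum.cong)

lemma left_cols_mult:
  "k \<le> dim_col B \<Longrightarrow> left_cols k (A * B) = A * left_cols k (B :: 'a :: semiring_0 mat)"
  unfolding left_cols_def by (intro eq_matI) (auto simp: scalar_prod_def col_def intro!: sum.cong)

lemma leading_block_diag_of:
  "k \<le> n \<Longrightarrow> upper_rows k (left_cols k (diag_of n a)) = diag_of k a"
  unfolding upper_rows_def left_cols_def diag_of_def by (intro eq_matI) auto

lemma dvd_chain_prefix_prod_dvd: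
  assumes chain: "dvd_chain g n \<alpha>"
    and X: "X \<in> mat_over g n" and Y: "Y \<in> mat_over g n"
    and eq: "diag_of n \<beta> = X * diag_of n \<alpha> * Y" and k: "k \<le> n"
  shows "R_dvd g (\<Prod>i<k. \<alpha> i) (\<Prod>i<k. \<beta> i)"
proof -
  have cX: "X \<in> carrier_mat n n" "entries_in_R g X" and cY: "Y \<in> carrier_mat n n" "entries_in_R g Y"
    using X Y by (auto simp: mat_over_iff)
  have "left_cols k (X * diag_of n \<alpha> * Y) = X * diag_of n \<alpha> * left_cols k Y"
    by (rule left_cols_mult) (use cY k in auto)
  moreover have "upper_rows k (X * diag_of n \<alpha> * left_cols k Y) =
      upper_rows k (X * diag_of n \<alpha>) * left_cols k Y"
    by (rule upper_rows_mult) (use cX cY k in \<open>auto simp: left_cols_def\<close>)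
  moreover have "upper_rows k (X * diag_of n \<alpha>) = upper_rows k X * diag_of n \<alpha>"
    by (rule upper_rows_mult) (use cX k in auto)
  ultimately have "upper_rows k (left_cols k (diag_of n \<beta>)) =
      upper_rows k X * diag_of n \<alpha> * left_cols k Y"
    unfolding eq by simp
  then have "(\<Prod>i<k. \<beta> i) = det (upper_rows k X * diag_of n \<alpha> * left_cols k Y)"
    using k leading_block_diag_of[of k n \<beta>] det_diag_of[of k \<beta>] by simp
  also have "R_dvd g (\<Prod>i<k. \<alpha> i) \<dots>"
  proof (rule R_dvd_det_mult_diag)
    show "upper_rows k X \<in> carrier_mat k n" "entries_in_R g (upper_rows k X)"
      using cX k by (auto intro: upper_rows_carrier entries_in_R_upper_rows)
    show "left_cols k Y \<in> carrier_mat n k" "entries_in_R g (left_cols k Y)"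
      using cY k by (auto intro: left_cols_carrier entries_in_R_left_cols)
  qed (rule dvd_chain_prod[OF chain])
  finally show ?thesis .
qed

section \<open>Uniqueness of the Smith normal form\<close>

lemma ring_R_unit_cases:
  assumes u: "u \<in> ring_R g" and v: "v \<in> ring_R g" and uv: "u * v = 1"
  shows "u \<in> {1, -1, \<i>, -\<i>}"
proof -
  obtain a b c d :: int where ab: "Re u = a" "Im u = b" and cd: "Re v = c" "Im v = d"
    using u v unfolding ring_R_def by (auto split: if_splits elim!: Ints_cases)
  have "(cmod u)\<^sup>2 * (cmod v)\<^sup>2 = 1"
    using arg_cong[OF uv, of "\<lambda>z. (cmod z)\<^sup>2"] by (simp add: norm_mult power_mult_distrib)
  then have "real_of_int ((a\<^sup>2 + b\<^sup>2) * (c\<^sup>2 + d\<^sup>2)) = 1"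
    using ab cd by (simp add: cmod_power2)
  then have prod: "(a\<^sup>2 + b\<^sup>2) * (c\<^sup>2 + d\<^sup>2) = 1"
    by linarith
  then have "a\<^sup>2 + b\<^sup>2 \<noteq> 0"
    by auto
  then have "0 < a\<^sup>2 + b\<^sup>2"
    using sum_power2_ge_zero[of a b] by linarith
  then have ab1: "a\<^sup>2 + b\<^sup>2 = 1"
    using pos_zmult_eq_1_iff prod by blast
  then have "a\<^sup>2 \<le> 1" "b\<^sup>2 \<le> 1"
    by (smt (verit) zero_le_power2)+
  then have "a \<in> {-1, 0, 1}" "b \<in> {-1, 0, 1}"
    by (auto simp: abs_square_le_1)
  then show ?thesis
    using ab1 ab by (auto simp: complex_eq_iff)
qed

lemma snf_normalized_nonzero: "snf_normalized g z \<Longrightarrow> z \<noteq> 0"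
  by (auto simp: snf_normalized_def split: if_splits)

lemma snf_normalized_unit_eq_one:
  assumes "u \<in> {1, -1, \<i>, -\<i>}" "u \<in> ring_R g" "z \<in> ring_R g"
    and "snf_normalized g z" "snf_normalized g (u * z)"
  shows "u = 1"
  using assms by (auto simp: snf_normalized_def ring_R_def split: if_splits)

lemma snf_normalized_associated_eq:
  assumes "a \<in> ring_R g" "snf_normalized g a" "snf_normalized g b"
    and "R_dvd g a b" "R_dvd g b a"
  shows "a = b"
proof -
  obtain u v where uv: "u \<in> ring_R g" "b = a * u" "v \<in> ring_R g" "a = b * v"
    using assms(4,5) unfolding R_dvd_def by blast
  then have "a * (u * v) = a * 1"
    by (metis mult.assoc mult_1_right)
  then have "u * v = 1"
    using snf_normalized_nonzero[OF assms(2)] mult_left_cancel by blast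
  then have "u \<in> {1, -1, \<i>, -\<i>}"
    using ring_R_unit_cases uv(1,3) by blast
  then have "u = 1"
    using snf_normalized_unit_eq_one uv(1,2) assms(1-3) by (metis mult.commute)
  then show ?thesis
    using uv by simp
qed

lemma SNF_equivalent_diag:
  assumes "is_SNF g n A \<alpha>" "is_SNF g n A \<beta>"
  obtains X Y where "X \<in> mat_over g n" "Y \<in> mat_over g n"
    "diag_of n \<beta> = X * diag_of n \<alpha> * Y"
proof -
  obtain P Q P' Q' where PQ: "P \<in> GL_R g n" "Q \<in> GL_R g n" "A = P * diag_of n \<alpha> * Q"
    and PQ': "P' \<in> GL_R g n" "Q' \<in> GL_R g n" "A = P' * diag_of n \<beta> * Q'"
    using assms unfolding is_SNF_def by blast
  obtain P'' where P'': "P'' \<in> GL_R g n" "P'' * P' = 1\<^sub>m n"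
    using GL_R_inverse[OF PQ'(1)] by blast
  obtain Q'' where Q'': "Q'' \<in> GL_R g n" "Q' * Q'' = 1\<^sub>m n"
    using GL_R_inverse[OF PQ'(2)] by blast
  note carriers = PQ(1,2)[THEN GL_R_carrier] PQ'(1,2)[THEN GL_R_carrier]
    P''(1)[THEN GL_R_carrier] Q''(1)[THEN GL_R_carrier]
  have "diag_of n \<beta> = (P'' * P') * diag_of n \<beta> * (Q' * Q'')"
    using P''(2) Q''(2) carriers by simp
  also have "\<dots> = P'' * A * Q''"
    unfolding PQ'(3) using carriers by (simp add: assoc_mult_mat[of _ n n _ n _ n])
  also have "\<dots> = (P'' * P) * diag_of n \<alpha> * (Q * Q'')"
    unfolding PQ(3) using carriers by (simp add: assoc_mult_mat[of _ n n _ n _ n])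
  finally have "diag_of n \<beta> = (P'' * P) * diag_of n \<alpha> * (Q * Q'')" .
  moreover have "P'' * P \<in> mat_over g n" "Q * Q'' \<in> mat_over g n"
    using GL_R_mult[OF P''(1) PQ(1)] GL_R_mult[OF PQ(2) Q''(1)] unfolding GL_R_def by blast+
  ultimately show ?thesis
    by (intro that)
qed

lemma is_SNF_prefix_prod_dvd:
  assumes \<alpha>: "is_SNF g n A \<alpha>" and \<beta>: "is_SNF g n A \<beta>" and k: "k \<le> n"
  shows "R_dvd g (\<Prod>i<k. \<alpha> i) (\<Prod>i<k. \<beta> i)"
proof -
  obtain X Y where "X \<in> mat_over g n" "Y \<in> mat_over g n" "diag_of n \<beta> = X * diag_of n \<alpha> * Y"
    using SNF_equivalent_diag[OF \<alpha> \<beta>] .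
  moreover have "dvd_chain g n \<alpha>"
    using \<alpha> unfolding is_SNF_def dvd_chain_def by blast
  ultimately show ?thesis
    using dvd_chain_prefix_prod_dvd k by blast
qed

lemma is_SNF_unique:
  assumes \<alpha>: "is_SNF g n A \<alpha>" and \<beta>: "is_SNF g n A \<beta>" and j: "j < n"
  shows "\<alpha> j = \<beta> j"
proof -
  have entries: "\<gamma> i \<in> ring_R g" "snf_normalized g (\<gamma> i)" "\<gamma> i \<noteq> 0"
    if "is_SNF g n A \<gamma>" "i < n" for \<gamma> i
    using that snf_normalized_nonzero unfolding is_SNF_def by blast+
  have entry_dvd: "R_dvd g (\<gamma> j) (\<delta> j)" if "is_SNF g n A \<gamma>" "is_SNF g n A \<delta>" for \<gamma> \<delta>
  proof (rule R_dvd_mult_cancel)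
    show "R_dvd g (\<Prod>i<j. \<delta> i) (\<Prod>i<j. \<gamma> i)"
      using is_SNF_prefix_prod_dvd[OF that(2,1)] j by simp
    show "R_dvd g ((\<Prod>i<j. \<gamma> i) * \<gamma> j) ((\<Prod>i<j. \<delta> i) * \<delta> j)"
      using is_SNF_prefix_prod_dvd[OF that, of "Suc j"] j by simp
    show "(\<Prod>i<j. \<delta> i) \<noteq> 0"
      using entries(3)[OF that(2)] j by simp
  qed
  show ?thesis
    using entries[OF \<alpha> j] entries[OF \<beta> j] entry_dvd[OF \<alpha> \<beta>] entry_dvd[OF \<beta> \<alpha>]
    by (intro snf_normalized_associated_eq)
qed

section \<open>Matrices with \<open>A\<^sup>* A = \<lambda> I\<close>\<close>

lemma snf_normalized_div_cnj:
  assumes "snf_normalized g a" "0 < m"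
  shows "snf_normalized g (of_nat m / cnj a)"
proof -
  define r where "r = real m / (cmod a)\<^sup>2"
  have "a \<noteq> 0"
    using snf_normalized_nonzero[OF assms(1)] .
  then have "of_nat m / cnj a = complex_of_real r * a"
    unfolding r_def using complex_norm_square[of a] by (simp add: field_simps)
  moreover have "0 < r"
    unfolding r_def using assms(2) \<open>a \<noteq> 0\<close> by simp
  ultimately show ?thesis
    using assms(1) by (auto simp: snf_normalized_def split: if_splits)
qed

lemma dvd_chain_reversed_div_cnj:
  assumes chain: "dvd_chain g n \<alpha>" and nz: "\<forall>i<n. \<alpha> i \<noteq> 0"
  shows "dvd_chain g n (\<lambda>j. c / cnj (\<alpha> (n - 1 - j)))"
  unfolding dvd_chain_def
proof (intro allI impI)
  fix j assume j: "Suc j < n"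
  define i where "i = n - 1 - Suc j"
  have i: "Suc i = n - 1 - j" "Suc i < n"
    using j unfolding i_def by auto
  then have "R_dvd g (\<alpha> i) (\<alpha> (Suc i))"
    using chain unfolding dvd_chain_def by blast
  then obtain u where u: "u \<in> ring_R g" "\<alpha> (n - 1 - j) = \<alpha> i * u"
    unfolding R_dvd_def i(1) by blast
  moreover have "u \<noteq> 0"
    using nz u(2) i by force
  ultimately have "c / cnj (\<alpha> i) = c / cnj (\<alpha> (n - 1 - j)) * cnj u"
    by simp
  then show "R_dvd g (c / cnj (\<alpha> (n - 1 - j))) (c / cnj (\<alpha> (n - 1 - Suc j)))"
    unfolding R_dvd_def i_def using u(1) by auto
qed

lemma GL_R_equiv_diag_entries:
  assumes "A \<in> mat_over g n" "P \<in> GL_R g n" "Q \<in> GL_R g n" "A = P * diag_of n \<beta> * Q" "i < n"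
  shows "\<beta> i \<in> ring_R g"
proof -
  obtain P' where P': "P' \<in> GL_R g n" "P' * P = 1\<^sub>m n"
    using GL_R_inverse[OF assms(2)] by blast
  obtain Q' where Q': "Q' \<in> GL_R g n" "Q * Q' = 1\<^sub>m n"
    using GL_R_inverse[OF assms(3)] by blast
  note carriers = assms(2,3)[THEN GL_R_carrier] P'(1)[THEN GL_R_carrier] Q'(1)[THEN GL_R_carrier]
  have "P' * A * Q' = (P' * P) * diag_of n \<beta> * (Q * Q')"
    unfolding assms(4) using carriers by (simp add: assoc_mult_mat[of _ n n _ n _ n])
  then have "diag_of n \<beta> = P' * A * Q'"
    using P'(2) Q'(2) carriers by simp
  moreover have "P' * A * Q' \<in> mat_over g n"
    using P'(1) Q'(1) assms(1) by (intro mat_over_mult) (auto simp: GL_R_def)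
  ultimately have "diag_of n \<beta> $$ (i, i) \<in> ring_R g"
    using assms(5) unfolding mat_over_def by auto
  then show ?thesis
    using assms(5) by (simp add: diag_of_def)
qed

definition rev_perm_mat :: "nat \<Rightarrow> complex mat" where
  "rev_perm_mat n = mat n n (\<lambda>(i, j). if i + j = n - 1 then 1 else 0)"

lemma rev_perm_mat_mult:
  assumes "M \<in> carrier_mat n m"
  shows "rev_perm_mat n * M = mat n m (\<lambda>(i, j). M $$ (n - 1 - i, j))"
proof (rule eq_matI)
  fix i j assume ij: "i < dim_row (mat n m (\<lambda>(i, j). M $$ (n - 1 - i, j)))"
    "j < dim_col (mat n m (\<lambda>(i, j). M $$ (n - 1 - i, j)))"
  then have "(rev_perm_mat n * M) $$ (i, j) = (\<Sum>l<n. (if i + l = n - 1 then 1 else 0) * M $$ (l, j))"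
    using assms by (simp add: rev_perm_mat_def scalar_prod_def atLeast0LessThan)
  also have "\<dots> = (\<Sum>l<n. if l = n - 1 - i then M $$ (l, j) else 0)"
    using ij by (intro sum.cong) auto
  also have "\<dots> = M $$ (n - 1 - i, j)"
    using ij by simp
  finally show "(rev_perm_mat n * M) $$ (i, j) = mat n m (\<lambda>(i, j). M $$ (n - 1 - i, j)) $$ (i, j)"
    using ij by simp
qed (use assms in \<open>auto simp: rev_perm_mat_def\<close>)

lemma mult_rev_perm_mat:
  assumes "M \<in> carrier_mat m n"
  shows "M * rev_perm_mat n = mat m n (\<lambda>(i, j). M $$ (i, n - 1 - j))"
proof (rule eq_matI)
  fix i j assume ij: "i < dim_row (mat m n (\<lambda>(i, j). M $$ (i, n - 1 - j)))"
    "j < dim_col (mat m n (\<lambda>(i, j). M $$ (i, n - 1 - j)))"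
  then have "(M * rev_perm_mat n) $$ (i, j) = (\<Sum>l<n. M $$ (i, l) * (if l + j = n - 1 then 1 else 0))"
    using assms by (simp add: rev_perm_mat_def scalar_prod_def atLeast0LessThan)
  also have "\<dots> = (\<Sum>l<n. if l = n - 1 - j then M $$ (i, l) else 0)"
    using ij by (intro sum.cong) auto
  also have "\<dots> = M $$ (i, n - 1 - j)"
    using ij by simp
  finally show "(M * rev_perm_mat n) $$ (i, j) = mat m n (\<lambda>(i, j). M $$ (i, n - 1 - j)) $$ (i, j)"
    using ij by simp
qed (use assms in \<open>auto simp: rev_perm_mat_def\<close>)

lemma rev_perm_mat_carrier [simp]: "rev_perm_mat n \<in> carrier_mat n n"
  unfolding rev_perm_mat_def by simp

lemma rev_perm_mat_GL_R: "rev_perm_mat n \<in> GL_R g n"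
proof -
  have "rev_perm_mat n * rev_perm_mat n = 1\<^sub>m n"
    unfolding rev_perm_mat_mult[OF rev_perm_mat_carrier]
    by (intro eq_matI) (auto simp: rev_perm_mat_def)
  moreover have "rev_perm_mat n \<in> mat_over g n"
    by (simp add: mat_over_def rev_perm_mat_def)
  ultimately show ?thesis
    unfolding GL_R_def by blast
qed

lemma rev_perm_mat_diag_of:
  "rev_perm_mat n * diag_of n (\<lambda>i. a (n - 1 - i)) * rev_perm_mat n = diag_of n a"
  unfolding rev_perm_mat_mult[OF diag_of_carrier] mult_rev_perm_mat[OF mat_carrier]
  by (intro eq_matI) (auto simp: diag_of_def)

lemma GL_R_equiv_reversed_diag:
  assumes P: "P \<in> GL_R g n" and Q: "Q \<in> GL_R g n" and A: "A = P * diag_of n a * Q"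
  shows "\<exists>P' \<in> GL_R g n. \<exists>Q' \<in> GL_R g n. A = P' * diag_of n (\<lambda>i. a (n - 1 - i)) * Q'"
proof (intro bexI)
  let ?J = "rev_perm_mat n"
  have "P * ?J * diag_of n (\<lambda>i. a (n - 1 - i)) * (?J * Q) =
      P * (?J * diag_of n (\<lambda>i. a (n - 1 - i)) * ?J) * Q"
    using P Q by (simp add: GL_R_carrier assoc_mult_mat[of _ n n _ n _ n])
  then show "A = P * ?J * diag_of n (\<lambda>i. a (n - 1 - i)) * (?J * Q)"
    unfolding A rev_perm_mat_diag_of by simp
  show "P * ?J \<in> GL_R g n" "?J * Q \<in> GL_R g n"
    using P Q rev_perm_mat_GL_R by (auto intro: GL_R_mult)
qed

lemma scaled_unitary_equiv_div_cnj_diag: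
  assumes P: "P \<in> GL_R g n" and Q: "Q \<in> GL_R g n" and A: "A = P * diag_of n \<alpha> * Q"
    and unitary: "conj_transpose A * A = c \<cdot>\<^sub>m 1\<^sub>m n" and nz: "\<forall>i<n. \<alpha> i \<noteq> 0"
  shows "\<exists>P' \<in> GL_R g n. \<exists>Q' \<in> GL_R g n. A = P' * diag_of n (\<lambda>i. c / cnj (\<alpha> i)) * Q'"
proof -
  let ?H = conj_transpose and ?D = "diag_of n \<alpha>"
  obtain P' where P': "P' \<in> GL_R g n" "P * P' = 1\<^sub>m n"
    using GL_R_inverse[OF P] by blast
  obtain Q' where Q': "Q' \<in> GL_R g n" "Q * Q' = 1\<^sub>m n" "Q' * Q = 1\<^sub>m n"
    using GL_R_inverse[OF Q] by blast
  have "A \<in> carrier_mat n n"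
    unfolding A using P Q by (simp add: GL_R_carrier)
  note carriers = this P[THEN GL_R_carrier] Q[THEN GL_R_carrier] P'(1)[THEN GL_R_carrier]
    Q'(1)[THEN GL_R_carrier] diag_of_carrier
  note assoc = assoc_mult_mat[of _ n n _ n _ n]
  have "?H P' * ?H P = 1\<^sub>m n" "?H Q * ?H Q' = 1\<^sub>m n" "?H Q' * ?H Q = 1\<^sub>m n"
    using carriers P'(2) Q'(2,3) by (simp_all flip: conj_transpose_mult)
  note inverses = this
  have HA: "?H A = ?H Q * ?H ?D * ?H P"
    unfolding A using carriers by (simp add: conj_transpose_mult[of _ n n _ n] assoc)
  define M where "M = ?H P * A * ?H Q"
  have M: "M \<in> carrier_mat n n"
    unfolding M_def A using carriers by simp
  have "?H ?D * M = (?H Q' * ?H Q) * ?H ?D * ?H P * A * ?H Q"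
    unfolding M_def using carriers inverses by (simp add: assoc)
  also have "\<dots> = ?H Q' * (?H A * A) * ?H Q"
    using carriers by (simp add: HA assoc)
  also have "\<dots> = c \<cdot>\<^sub>m 1\<^sub>m n"
    unfolding unitary using carriers inverses
    by (simp add: mult_smult_distrib[of _ n n _ n] mult_smult_assoc_mat[of _ n n _ n])
  finally have "diag_of n (\<lambda>i. cnj (\<alpha> i)) * M = c \<cdot>\<^sub>m 1\<^sub>m n"
    by (simp add: conj_transpose_diag_of)
  then have M_diag: "M = diag_of n (\<lambda>i. c / cnj (\<alpha> i))"
    using diag_of_mult_eq_smult_one nz M by simp
  have "?H P' * M * ?H Q' = (?H P' * ?H P) * A * (?H Q * ?H Q')"
    unfolding M_def using carriers by (simp add: assoc)
  then have "A = ?H P' * M * ?H Q'"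
    using carriers inverses by simp
  then show ?thesis
    unfolding M_diag
    using P'(1) Q'(1) GL_R_conj_transpose by blast
qed

lemma scaled_unitary_is_SNF_reversed_div_cnj:
  assumes A: "A \<in> mat_over g n" and lam: "0 < lam"
    and unitary: "conj_transpose A * A = of_nat lam \<cdot>\<^sub>m 1\<^sub>m n" and snf: "is_SNF g n A \<alpha>"
  shows "is_SNF g n A (\<lambda>j. of_nat lam / cnj (\<alpha> (n - 1 - j)))"
proof -
  define \<beta> where "\<beta> j = of_nat lam / cnj (\<alpha> (n - 1 - j))" for j
  obtain P Q where entries: "\<forall>j<n. \<alpha> j \<in> ring_R g \<and> snf_normalized g (\<alpha> j)"
    and chain: "dvd_chain g n \<alpha>"
    and PQ: "P \<in> GL_R g n" "Q \<in> GL_R g n" "A = P * diag_of n \<alpha> * Q"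
    using snf unfolding is_SNF_def dvd_chain_def by blast
  have nz: "\<forall>i<n. \<alpha> i \<noteq> 0"
    using entries snf_normalized_nonzero by blast
  obtain P1 Q1 where "P1 \<in> GL_R g n" "Q1 \<in> GL_R g n"
    "A = P1 * diag_of n (\<lambda>i. of_nat lam / cnj (\<alpha> i)) * Q1"
    using scaled_unitary_equiv_div_cnj_diag[OF PQ unitary nz] by blast
  then obtain P' Q' where P'Q': "P' \<in> GL_R g n" "Q' \<in> GL_R g n" "A = P' * diag_of n \<beta> * Q'"
    using GL_R_equiv_reversed_diag unfolding \<beta>_def by blast
  have "is_SNF g n A \<beta>"
    unfolding is_SNF_def
  proof (intro conjI allI impI)
    fix j assume "j < n"
    then show "\<beta> j \<in> ring_R g" "snf_normalized g (\<beta> j)"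
      using GL_R_equiv_diag_entries[OF A P'Q'] snf_normalized_div_cnj entries lam
      unfolding \<beta>_def by auto
  next
    fix j assume "Suc j < n"
    then show "R_dvd g (\<beta> j) (\<beta> (Suc j))"
      using dvd_chain_reversed_div_cnj[OF chain nz, of "of_nat lam"]
      unfolding \<beta>_def dvd_chain_def by blast
  qed (use P'Q' in blast)
  then show ?thesis
    unfolding \<beta>_def .
qed

theorem mainTheorem7:
  fixes gauss :: bool and n lam :: nat and A :: "complex mat" and \<alpha> :: "nat \<Rightarrow> complex"
  assumes "A \<in> mat_over gauss n"
    and "lam > 0"
    and "conj_transpose A * A = of_nat lam \<cdot>\<^sub>m 1\<^sub>m n"
    and "is_SNF gauss n A \<alpha>"
  shows "\<forall>j<n. cnj (\<alpha> j) * \<alpha> (n - 1 - j) = of_nat lam"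
proof (intro allI impI)
  fix j assume "j < n"
  then have "n - 1 - j < n"
    by simp
  then have nz: "\<alpha> (n - 1 - j) \<noteq> 0"
    using assms(4) snf_normalized_nonzero unfolding is_SNF_def by blast
  have "\<alpha> j = of_nat lam / cnj (\<alpha> (n - 1 - j))"
    using is_SNF_unique[OF assms(4) scaled_unitary_is_SNF_reversed_div_cnj[OF assms] \<open>j < n\<close>] .
  then have "\<alpha> j * cnj (\<alpha> (n - 1 - j)) = of_nat lam"
    using nz by (simp add: field_simps)
  then show "cnj (\<alpha> j) * \<alpha> (n - 1 - j) = of_nat lam"
    using complex_cnj_mult[of "\<alpha> j" "cnj (\<alpha> (n - 1 - j))"] by simp
qed

end
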